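(* Let $c\in\mathsf{ACirc}[n,m]$ with initial state $c_0$, and let $t<0$. Then there is a transition $t\vdash c_0\xrightarrow[0]{0}c_0$, i.e. with left label the zero vector of $k^n$, right label the zero vector of $k^m$, and target state again $c_0$.
   Context: Fix a field $k$. Circuits: terms built from generators with sorts $(n,m)$: copier $\Delta:(1,2)$, discard $!:(1,0)$, amplifier $\mathsf{s}_r:(1,1)$ ($r\in k$), register $\mathsf{x}:(1,1)$, adder $+:(2,1)$, zero $0:(0,1)$, one $\mathbf{1}:(0,1)$; mirror images $\Delta^{op}:(2,1)$, $!^{op}:(0,1)$, $\mathsf{s}_r^{op}$, $\mathsf{x}^{op}:(1,1)$, $+^{op}:(1,2)$, $0^{op}:(1,0)$, $\mathbf{1}^{op}:(1,0)$; $\mathrm{id}_0:(0,0),\mathrm{id}_1:(1,1),\mathrm{sw}:(2,2)$; closed under $;$ and $\oplus$; $\mathsf{ACirc}[n,m]$ denotes circuits of sort $(n,m)$. Operational semantics: a state is a circuit with a value of $k$ stored in each register ($\mathsf x$, $\mathsf x^{op}$); the initial state $c_0$ stores $0$ in all registers. Transitions $t\vdash c\xrightarrow[w]{v}c'$ (time $t\in\mathbb Z$, left label $v\in k^n$, right label $w\in k^m$; $\bullet$ denotes the empty vector) are generated by, for all $t$ and $a,b\in k$: $\Delta$: left $a$, right $(a,a)$; $!$: left $a$, right $\bullet$; $+$: left $(a,b)$, right $a+b$; $0$: left $\bullet$, right $0$; $\mathsf s_r$: left $a$, right $ra$; $\mathsf x$ storing $b$: left $a$, right $b$, new state stores $a$;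 $\mathbf 1$: left $\bullet$, right $1$ if $t=0$ and $0$ if $t\ne0$; each mirrored generator: the same rule with left and right labels exchanged; $\mathrm{id}_1$: $a/a$; $\mathrm{sw}$: $(a,b)/(b,a)$; $\mathrm{id}_0$: $\bullet/\bullet$; if $t\vdash c\xrightarrow[v]{u}c'$ and $t\vdash d\xrightarrow[w]{v}d'$ then $t\vdash c;d\xrightarrow[w]{u}c';d'$; if $t\vdash c\xrightarrow[v_1]{u_1}c'$ and $t\vdash d\xrightarrow[v_2]{u_2}d'$ then $t\vdash c\oplus d\xrightarrow[(v_1,v_2)]{(u_1,u_2)}c'\oplus d'$. *)

theory Defs
  imports Main
begin

text \<open>The first type parameter is the field of scalars (amplifier
  parameters); the second is the content of registers. A bare circuit has
  registers carrying unit; a state has registers carrying field elements.\<close>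

datatype ('k, 'v) circ =
    Copy | Disc | Amp 'k | Reg 'v | Add | Zero | One
  | CopyOp | DiscOp | AmpOp 'k | RegOp 'v | AddOp | ZeroOp | OneOp
  | Id0 | Id1 | Sw
  | Seq "('k, 'v) circ" "('k, 'v) circ"
  | Par "('k, 'v) circ" "('k, 'v) circ"

inductive has_sort :: "('k, 'v) circ \<Rightarrow> nat \<Rightarrow> nat \<Rightarrow> bool" where
  "has_sort Copy 1 2"
| "has_sort Disc 1 0"
| "has_sort (Amp r) 1 1"
| "has_sort (Reg v) 1 1"
| "has_sort Add 2 1"
| "has_sort Zero 0 1"
| "has_sort One 0 1"
| "has_sort CopyOp 2 1"
| "has_sort DiscOp 0 1"
| "has_sort (AmpOp r) 1 1"
| "has_sort (RegOp v) 1 1"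
| "has_sort AddOp 1 2"
| "has_sort ZeroOp 1 0"
| "has_sort OneOp 1 0"
| "has_sort Id0 0 0"
| "has_sort Id1 1 1"
| "has_sort Sw 2 2"
| "has_sort c n l \<Longrightarrow> has_sort d l m \<Longrightarrow> has_sort (Seq c d) n m"
| "has_sort c n1 m1 \<Longrightarrow> has_sort d n2 m2 \<Longrightarrow> has_sort (Par c d) (n1 + n2) (m1 + m2)"

definition ACirc :: "nat \<Rightarrow> nat \<Rightarrow> ('k, unit) circ set" where
  "ACirc n m = {c. has_sort c n m}"

definition init_state :: "('k::zero, 'v) circ \<Rightarrow> ('k, 'k) circ" where
  "init_state c = map_circ id (\<lambda>_. 0) c"

text \<open>Transitions  t |- s --(left v / right w)--> s'.\<close>
inductive trans :: "int \<Rightarrow> ('k::field, 'k) circ \<Rightarrow> 'k list \<Rightarrow> 'k list \<Rightarrow> ('k, 'k) circ \<Rightarrow> bool" where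
  t_copy: "trans t Copy [a] [a, a] Copy"
| t_disc: "trans t Disc [a] [] Disc"
| t_add: "trans t Add [a, b] [a + b] Add"
| t_zero: "trans t Zero [] [0] Zero"
| t_amp: "trans t (Amp r) [a] [r * a] (Amp r)"
| t_reg: "trans t (Reg b) [a] [b] (Reg a)"
| t_one: "trans t One [] [if t = 0 then 1 else 0] One"
| t_copyop: "trans t CopyOp [a, a] [a] CopyOp"
| t_discop: "trans t DiscOp [] [a] DiscOp"
| t_addop: "trans t AddOp [a + b] [a, b] AddOp"
| t_zeroop: "trans t ZeroOp [0] [] ZeroOp"
| t_ampop: "trans t (AmpOp r) [r * a] [a] (AmpOp r)"
| t_regop: "trans t (RegOp b) [b] [a] (RegOp a)"
| t_oneop: "trans t OneOp [if t = 0 then 1 else 0] [] OneOp"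
| t_id1: "trans t Id1 [a] [a] Id1"
| t_sw: "trans t Sw [a, b] [b, a] Sw"
| t_id0: "trans t Id0 [] [] Id0"
| t_seq: "trans t c u v c' \<Longrightarrow> trans t d v w d' \<Longrightarrow> trans t (Seq c d) u w (Seq c' d')"
| t_par: "trans t c u1 v1 c' \<Longrightarrow> trans t d u2 v2 d' \<Longrightarrow>
          trans t (Par c d) (u1 @ u2) (v1 @ v2) (Par c' d')"

end

theory Submission
  imports Defs
begin

lemma trans_init_state_zeros:
  fixes c :: "('k::field, 'v) circ" and t :: int
  assumes "has_sort c n m" and "t \<noteq> 0"
  shows "trans t (init_state c) (replicate n 0) (replicate m 0) (init_state c)"
proof -
  have amp: "trans t (Amp r) [0] [0] (Amp r)"
    and ampop: "trans t (AmpOp r) [0] [0] (AmpOp r)" for r :: 'k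
    using t_amp[of t r 0] t_ampop[of t r 0] by simp_all
  have add: "trans t Add [0, 0] [0] (Add :: ('k, 'k) circ)"
    and addop: "trans t AddOp [0] [0, 0] (AddOp :: ('k, 'k) circ)"
    using t_add[of t "0::'k" 0] t_addop[of t "0::'k" 0] by simp_all
  have one: "trans t One [] [0] (One :: ('k, 'k) circ)"
    and oneop: "trans t OneOp [0] [] (OneOp :: ('k, 'k) circ)"
    using t_one[of t] t_oneop[of t] \<open>t \<noteq> 0\<close> by simp_all
  from assms(1) show ?thesis
    by (induction rule: has_sort.induct)
      (auto simp: init_state_def numeral_2_eq_2 replicate_add
        intro: trans.intros amp ampop add addop one oneop)
qed

theorem lemma2:
  fixes c :: "('k::field, unit) circ" and n m :: nat and t :: int
  assumes "c \<in> ACirc n m" and "t < 0"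
  shows "trans t (init_state c) (replicate n 0) (replicate m 0) (init_state c)"
  using assms by (auto simp: ACirc_def intro: trans_init_state_zeros)

end
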